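(* Let $\partial\Omega\subset\mathbb{C}$ be a simple analytic closed curve bounding a domain $\Omega$ (either the bounded interior or the unbounded exterior domain), and let $Z:\mathbb{R}\to\mathbb{C}$ be an analytic $2\pi$-periodic counter-clockwise parametrization of $\partial\Omega$ with $|Z'(s)|>0$ for all real $s$. Let $\tau$ be a real-valued real-analytic function on $\partial\Omega$, let $\tilde\tau(s)=\tau(Z(s))$, and define for $z\in\mathbb{C}\setminus\partial\Omega$ $$v(z)=\frac{-1}{2\pi i}\int_0^{2\pi}\frac{\tilde\tau(s)}{Z(s)-z}Z'(s)\,ds,\qquad v^{(N)}(z)=\frac{-1}{iN}\sum_{j=1}^N\frac{\tilde\tau(2\pi j/N)}{Z(2\pi j/N)-z}Z'(2\pi j/N),$$ so that $\operatorname{Re} v$ is the Laplace double-layer potential with density $\tau$ and $v^{(N)}$ its $N$-point periodic trapezoid rule approximation; set $\epsilon_N(z)=\operatorname{Re}(v^{(N)}(z)-v(z))$. Let $\alpha>0$ be such that $Z$ continues analytically to the strip $|\operatorname{Im} s|<\alpha$ and the annular neighborhood $A_\alpha=Z(\{t+ia: t,a\in\mathbb{R},|a|<\alpha\})$ is such that $Z^{-1}$ is holomorphic (single-valued) in the closure of $A_\alpha$ and $\tau$ extends to a bounded holomorphic function in the closure of $A_\alpha$. Then for each $z\in A_\alpha\setminus\partial\Omega$, writing $s$ for its preimage with $Z(s)=z$ and $|\operatorname{Im} s|<\alpha$, there exist constants $C$ and $N_0$ such that $$|\epsilon_N(z)|\le C e^{-|\operatorname{Im} s|N}\qquad\text{for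 all } N\ge N_0.$$ Moreover, the constant $C$ may be chosen to be any number greater than $|\tilde\tau(s)|=|\tau(z)|$ (with $\tau$ denoting its holomorphic extension).
   Context: $\mathbb{R}^2$ is identified with $\mathbb{C}$. $\tilde\tau$ denotes the analytic continuation of the pullback $\tau\circ Z$ into the strip. *)

theory Defs
  imports "HOL-Complex_Analysis.Complex_Analysis"
begin

definition strip :: "real \<Rightarrow> complex set" where
  "strip a = {s. \<bar>Im s\<bar> < a}"

definition closed_strip :: "real \<Rightarrow> complex set" where
  "closed_strip a = {s. \<bar>Im s\<bar> \<le> a}"

text \<open>The closed curve t in [0,1] to Z(2 pi t), i.e. the boundary curve.\<close>
definition bcurve :: "(complex \<Rightarrow> complex) \<Rightarrow> real \<Rightarrow> complex" where
  "bcurve Z t = Z (complex_of_real (2 * pi * t))"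

text \<open>Cauchy-type integral v(z); its real part is the double-layer potential.
  Z' on the real line is the complex derivative of the analytic Z.\<close>
definition layer_v :: "(complex \<Rightarrow> complex) \<Rightarrow> (complex \<Rightarrow> complex) \<Rightarrow> complex \<Rightarrow> complex" where
  "layer_v Z \<tau> z = (-1 / (2 * pi * \<i>)) *
     integral {0..2*pi} (\<lambda>s::real. \<tau> (Z (of_real s)) / (Z (of_real s) - z) * deriv Z (of_real s))"

definition layer_vN :: "(complex \<Rightarrow> complex) \<Rightarrow> (complex \<Rightarrow> complex) \<Rightarrow> nat \<Rightarrow> complex \<Rightarrow> complex" where
  "layer_vN Z \<tau> N z = (-1 / (\<i> * of_nat N)) *
     (\<Sum>j=1..N. let s = complex_of_real (2 * pi * real j / real N) in
        \<tau> (Z s) / (Z s - z) * deriv Z s)"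

definition layer_err :: "(complex \<Rightarrow> complex) \<Rightarrow> (complex \<Rightarrow> complex) \<Rightarrow> nat \<Rightarrow> complex \<Rightarrow> real" where
  "layer_err Z \<tau> N z = Re (layer_vN Z \<tau> N z - layer_v Z \<tau> z)"

end

theory Submission
  imports Defs "HOL-Real_Asymp.Real_Asymp"
begin

text \<open>
  Write f(w) = \<tau>(Z w) Z'(w) / (Z w - z). By periodicity and injectivity of Z, f is
  2\<pi>-periodic and meromorphic in the strip |Im w| < \<alpha>, and its poles there are the
  simple poles s + 2\<pi>k, all with residue \<tau>(z). The kernel 1/(e^{iNw} - 1) has simple poles
  with residue 1/(iN) at the nodes 2\<pi>j/N. Integrating f against it around a period rectangle
  with horizontal sides Im w = \<plusminus>\<beta>, |Im s| < \<beta> < \<alpha>, turns the residues at the nodes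
  into the trapezoid sum, while the pole of f inside contributes 2\<pi>i \<tau>(z) K with
  |K| \<le> 1/(e^{N|Im s|} - 1). The exact integral over the real period is shifted to the side
  of the rectangle away from the poles (the lower side if Im s > 0, the upper one otherwise);
  there it combines with the kernel into 1/(e^{iNw} - 1) on the lower side and
  e^{iNw}/(e^{iNw} - 1) on the upper side, both of size e^{-N\<beta>}/(1 - e^{-N\<beta>}).
  So the error is at most (|\<tau>(z)| + o(1)) e^{-N|Im s|}.
\<close>

section \<open>Periodic functions on a horizontal strip\<close>

lemma open_Im_band: "open {w. c < Im w \<and> Im w < d}"
  by (intro open_Collect_conj open_Collect_less continuous_intros)

lemma convex_Im_band: "convex {w. c < Im w \<and> Im w < d}"
  using convex_Int[OF convex_halfspace_Im_gt convex_halfspace_Im_lt] by (simp add: Int_def)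

lemma strip_eq_Im_band: "strip a = {w. -a < Im w \<and> Im w < a}"
  by (auto simp: strip_def)

lemma open_strip: "open (strip a)"
  unfolding strip_eq_Im_band by (rule open_Im_band)

lemma connected_strip: "connected (strip a)"
  unfolding strip_eq_Im_band by (intro convex_connected convex_Im_band)

lemma Reals_subset_strip: "0 < a \<Longrightarrow> \<real> \<subseteq> strip a"
  by (auto simp: strip_def complex_is_Real_iff)

lemma strip_periodic_int_multiple:
  assumes per: "\<And>w. w \<in> strip a \<Longrightarrow> g (w + 2*pi) = g w" and w: "w \<in> strip a"
  shows "g (w + of_int k * (2*pi)) = g w"
proof (induction k rule: int_induct[where k = 0])
  case (step1 i)
  have "g (w + of_int (i + 1) * (2*pi)) = g ((w + of_int i * (2*pi)) + 2*pi)"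
    by (simp add: algebra_simps)
  also have "\<dots> = g (w + of_int i * (2*pi))"
    using w by (intro per) (simp add: strip_def)
  finally show ?case using step1 by simp
next
  case (step2 i)
  have "g (w + of_int i * (2*pi)) = g ((w + of_int (i - 1) * (2*pi)) + 2*pi)"
    by (simp add: algebra_simps)
  also have "\<dots> = g (w + of_int (i - 1) * (2*pi))"
    using w by (intro per) (simp add: strip_def)
  finally show ?case using step2 by simp
qed simp

lemma deriv_strip_periodic:
  assumes hol: "g holomorphic_on strip a" and per: "\<And>w. w \<in> strip a \<Longrightarrow> g (w + 2*pi) = g w"
    and w: "w \<in> strip a"
  shows "deriv g (w + 2*pi) = deriv g w"
proof -
  have "(g has_field_derivative deriv g (w + 2*pi)) (at (w + 2*pi))"
    using w by (intro holomorphic_derivI[OF hol open_strip]) (simp add: strip_def)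
  hence "((\<lambda>u. g (u + 2*pi)) has_field_derivative deriv g (w + 2*pi) * 1) (at w)"
    by (rule DERIV_chain2) (auto intro!: derivative_eq_intros)
  hence "deriv (\<lambda>u. g (u + 2*pi)) w = deriv g (w + 2*pi)"
    by (simp add: DERIV_imp_deriv)
  moreover have "deriv (\<lambda>u. g (u + 2*pi)) w = deriv g w"
  proof (rule deriv_cong_ev)
    show "\<forall>\<^sub>F u in nhds w. g (u + 2*pi) = g u"
      using eventually_nhds_in_open[OF open_strip w] by (rule eventually_mono) (rule per)
  qed simp
  ultimately show ?thesis by simp
qed

lemma strip_periodic_of_real_periodic:
  assumes a: "0 < a" and hol: "g holomorphic_on strip a"
    and per: "\<And>t::real. g (of_real (t + 2*pi)) = g (of_real t)" and w: "w \<in> strip a"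
  shows "g (w + 2*pi) = g w"
proof -
  have "(g \<circ> (\<lambda>w. w + 2*pi)) holomorphic_on strip a"
    by (rule holomorphic_on_compose_gen[OF _ hol]) (auto intro!: holomorphic_intros simp: strip_def)
  hence diff_hol: "(\<lambda>w. g (w + 2*pi) - g w) holomorphic_on strip a"
    using hol by (intro holomorphic_intros) (auto simp: o_def)
  have limpt: "(0::complex) islimpt \<real>"
    unfolding islimpt_approachable
  proof (intro allI impI)
    fix e :: real assume "e > 0"
    thus "\<exists>x'\<in>\<real>. x' \<noteq> (0::complex) \<and> dist x' 0 < e"
      by (intro bexI[of _ "complex_of_real (e/2)"]) (auto simp: dist_norm)
  qed
  have on_reals: "g (x + 2*pi) - g x = 0" if x: "x \<in> \<real>" for x :: complex
  proof -
    obtain r where "x = of_real r" using x by (auto elim: Reals_cases)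
    thus ?thesis using per[of r] by simp
  qed
  have "0 \<in> strip a" using a by (simp add: strip_def)
  from analytic_continuation[OF diff_hol open_strip connected_strip Reals_subset_strip[OF a]
      this limpt on_reals w]
  have "g (w + 2*pi) - g w = 0" .
  thus ?thesis by simp
qed

section \<open>Integrals over one period of a horizontal line\<close>

definition period_line_integral :: "real \<Rightarrow> real \<Rightarrow> (complex \<Rightarrow> complex) \<Rightarrow> complex" where
  "period_line_integral a y g = contour_integral (linepath (Complex a y) (Complex (a + 2*pi) y)) g"

lemma contour_integral_linepath_translate:
  "contour_integral (linepath (a + c) (b + c)) f = contour_integral (linepath a b) (\<lambda>w. f (w + c))"
  unfolding contour_integral_integral
  by (simp add: linepath_def algebra_simps scaleR_conv_of_real)

lemma residue_quotient_simple_zero: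
  assumes "open S" "p \<in> S" "A holomorphic_on S" "B holomorphic_on S" "B p = 0"
    "(B has_field_derivative d) (at p)" "d \<noteq> 0" "\<And>w. w \<in> S \<Longrightarrow> w \<noteq> p \<Longrightarrow> B w \<noteq> 0"
  shows "residue (\<lambda>w. A w / B w) p = A p / d"
proof (rule residue_simple'[OF assms(1,2)])
  show "(\<lambda>w. A w / B w) holomorphic_on S - {p}"
    using assms by (intro holomorphic_intros) (auto intro: holomorphic_on_subset)
  have "((\<lambda>w. (B w - B p) / (w - p)) \<longlongrightarrow> d) (at p)"
    using assms(6) by (simp add: has_field_derivative_iff)
  hence "((\<lambda>w. inverse ((B w - B p) / (w - p))) \<longlongrightarrow> inverse d) (at p)"
    using assms(7) by (intro tendsto_inverse) auto
  moreover have "(A \<longlongrightarrow> A p) (at p)"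
    using assms(1-3) holomorphic_on_imp_continuous_on continuous_on_eq_continuous_at isCont_def
    by blast
  ultimately have "((\<lambda>w. A w * inverse ((B w - B p) / (w - p))) \<longlongrightarrow> A p * inverse d) (at p)"
    by (intro tendsto_mult)
  moreover have "(\<lambda>w. A w * inverse ((B w - B p) / (w - p))) = (\<lambda>w. A w / B w * (w - p))"
    using assms(5) by (simp add: inverse_divide fun_eq_iff)
  ultimately show "((\<lambda>w. A w / B w * (w - p)) \<longlongrightarrow> A p / d) (at p)"
    by (simp add: divide_inverse)
qed

lemma contour_integral_period_rectpath:
  fixes g :: "complex \<Rightarrow> complex"
  assumes cont: "continuous_on (path_image (rectpath (Complex a y1) (Complex (a + 2*pi) y2))) g"
    and y: "y1 \<le> y2"
    and per: "\<And>w::complex. w \<in> cbox (Complex a y1) (Complex (a + 2*pi) y2) \<Longrightarrow> g (w + 2*pi) = g w"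
  shows "contour_integral (rectpath (Complex a y1) (Complex (a + 2*pi) y2)) g
       = period_line_integral a y1 g - period_line_integral a y2 g"
proof -
  define a1 a2 a3 a4 where "a1 = Complex a y1" "a2 = Complex (a + 2*pi) y1"
    "a3 = Complex (a + 2*pi) y2" "a4 = Complex a y2"
  have rp: "rectpath a1 a3 = linepath a1 a2 +++ linepath a2 a3 +++ linepath a3 a4 +++ linepath a4 a1"
    by (simp add: rectpath_def Let_def a1_a2_a3_a4_def)
  have pim: "path_image (rectpath a1 a3) = cbox a1 a3 - box a1 a3"
    using y by (intro path_image_rectpath_cbox_minus_box) (auto simp: a1_a2_a3_a4_def)
  have segs: "closed_segment a1 a2 \<subseteq> path_image (rectpath a1 a3)"
    "closed_segment a2 a3 \<subseteq> path_image (rectpath a1 a3)"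
    "closed_segment a3 a4 \<subseteq> path_image (rectpath a1 a3)"
    "closed_segment a4 a1 \<subseteq> path_image (rectpath a1 a3)"
    unfolding rp by (auto simp: path_image_join)
  note cont' = continuous_on_subset[OF cont[folded a1_a2_a3_a4_def]]
  have "contour_integral (rectpath a1 a3) g = contour_integral (linepath a1 a2) g +
     contour_integral (linepath a2 a3) g + contour_integral (linepath a3 a4) g
     + contour_integral (linepath a4 a1) g"
    unfolding rp using segs
    by (simp add: contour_integrable_joinI contour_integrable_continuous_linepath cont')
  also have "contour_integral (linepath a3 a4) g = - contour_integral (linepath a4 a3) g"
    using segs by (intro contour_integral_reverse_linepath cont') auto
  also have "contour_integral (linepath a2 a3) g = - contour_integral (linepath a4 a1) g"
  proof -
    have "a2 = a1 + 2*pi" "a3 = a4 + 2*pi"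
      by (simp_all add: a1_a2_a3_a4_def complex_eq_iff)
    hence "contour_integral (linepath a2 a3) g = contour_integral (linepath a1 a4) (\<lambda>w. g (w + 2*pi))"
      by (simp add: contour_integral_linepath_translate)
    also have "\<dots> = contour_integral (linepath a1 a4) g"
    proof (rule contour_integral_eq)
      fix x assume "x \<in> path_image (linepath a1 a4)"
      hence "x \<in> cbox a1 a3"
        using segs(4) pim by (auto simp: closed_segment_commute)
      thus "g (x + 2*pi) = g x" using per by (simp add: a1_a2_a3_a4_def)
    qed
    also have "\<dots> = - contour_integral (linepath a4 a1) g"
      using segs by (intro contour_integral_reverse_linepath cont') (auto simp: closed_segment_commute)
    finally show ?thesis .
  qed
  finally show ?thesis
    by (simp add: period_line_integral_def a1_a2_a3_a4_def algebra_simps)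
qed

lemma period_line_integral_residue_theorem:
  fixes g :: "complex \<Rightarrow> complex"
  assumes S: "open S" "connected S" and fin: "finite pts" and hol: "g holomorphic_on S - pts"
    and sub: "cbox (Complex a y1) (Complex (a + 2*pi) y2) \<subseteq> S"
    and pts: "pts \<subseteq> box (Complex a y1) (Complex (a + 2*pi) y2)" and y: "y1 < y2"
    and per: "\<And>w::complex. w \<in> cbox (Complex a y1) (Complex (a + 2*pi) y2) \<Longrightarrow> g (w + 2*pi) = g w"
  shows "period_line_integral a y1 g - period_line_integral a y2 g
       = 2*pi*\<i> * (\<Sum>p\<in>pts. residue g p)"
proof -
  define \<gamma> where "\<gamma> = rectpath (Complex a y1) (Complex (a + 2*pi) y2)"
  have "path_image \<gamma>
      = cbox (Complex a y1) (Complex (a + 2*pi) y2) - box (Complex a y1) (Complex (a + 2*pi) y2)"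
    unfolding \<gamma>_def using y by (intro path_image_rectpath_cbox_minus_box) auto
  hence pim: "path_image \<gamma> \<subseteq> S - pts" using sub pts by auto
  have "period_line_integral a y1 g - period_line_integral a y2 g = contour_integral \<gamma> g"
    unfolding \<gamma>_def using y per continuous_on_subset[OF holomorphic_on_imp_continuous_on[OF hol] pim]
    by (intro contour_integral_period_rectpath[symmetric]) (auto simp: \<gamma>_def)
  also have "\<dots> = 2*pi*\<i> * (\<Sum>p\<in>pts. winding_number \<gamma> p * residue g p)"
  proof (rule Residue_theorem[OF S fin hol])
    show "\<forall>z. z \<notin> S \<longrightarrow> winding_number \<gamma> z = 0"
      using sub y by (auto intro!: winding_number_rectpath_outside simp: \<gamma>_def)
  qed (use pim in \<open>auto simp: \<gamma>_def\<close>)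
  also have "(\<Sum>p\<in>pts. winding_number \<gamma> p * residue g p) = (\<Sum>p\<in>pts. residue g p)"
    using pts by (intro sum.cong) (auto simp: winding_number_rectpath \<gamma>_def)
  finally show ?thesis .
qed

lemma period_line_integral_eq_of_holomorphic:
  assumes hol: "g holomorphic_on {w. c < Im w \<and> Im w < d}"
    and per: "\<And>w. c < Im w \<Longrightarrow> Im w < d \<Longrightarrow> g (w + 2*pi) = g w"
    and y: "c < y1" "y1 < y2" "y2 < d"
  shows "period_line_integral a y1 g = period_line_integral a y2 g"
proof -
  have "period_line_integral a y1 g - period_line_integral a y2 g
      = 2*pi*\<i> * (\<Sum>p\<in>{}. residue g p)"
  proof (rule period_line_integral_residue_theorem[OF open_Im_band convex_connected[OF convex_Im_band]])
    show "cbox (Complex a y1) (Complex (a + 2*pi) y2) \<subseteq> {w. c < Im w \<and> Im w < d}"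
      using y by (auto simp: in_cbox_complex_iff)
    show "g (w + 2*pi) = g w" if "w \<in> cbox (Complex a y1) (Complex (a + 2*pi) y2)" for w
      using that y by (intro per) (auto simp: in_cbox_complex_iff)
  qed (use hol y in auto)
  thus ?thesis by simp
qed

lemma closed_segment_horizontal:
  "closed_segment (Complex a y) (Complex (a + 2*pi) y) = {w. Im w = y \<and> a \<le> Re w \<and> Re w \<le> a + 2*pi}"
  by (auto simp: closed_segment_same_Im closed_segment_eq_real_ivl)

lemma contour_integrable_period_line:
  assumes "continuous_on {w. Im w = y} g"
  shows "g contour_integrable_on linepath (Complex a y) (Complex (a + 2*pi) y)"
  by (rule contour_integrable_continuous_linepath, rule continuous_on_subset[OF assms])
    (auto simp: closed_segment_horizontal)

lemma period_line_integral_add: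
  assumes "continuous_on {w. Im w = y} g" "continuous_on {w. Im w = y} h"
  shows "period_line_integral a y (\<lambda>w. g w + h w)
       = period_line_integral a y g + period_line_integral a y h"
  unfolding period_line_integral_def
  by (intro contour_integral_add contour_integrable_period_line assms)

lemma period_line_integral_cong:
  assumes "\<And>w. Im w = y \<Longrightarrow> g w = h w"
  shows "period_line_integral a y g = period_line_integral a y h"
  unfolding period_line_integral_def
  by (rule contour_integral_eq) (simp add: closed_segment_horizontal assms)

lemma norm_period_line_integral_le:
  assumes cont: "continuous_on {w. Im w = y} g"
    and bound: "\<And>w. Im w = y \<Longrightarrow> a \<le> Re w \<Longrightarrow> Re w \<le> a + 2*pi \<Longrightarrow> cmod (g w) \<le> C"
  shows "cmod (period_line_integral a y g) \<le> C * (2*pi)"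
proof -
  have "cmod (g (Complex a y)) \<le> C" by (rule bound) simp_all
  hence "0 \<le> C" by (rule order_trans[OF norm_ge_zero])
  hence "cmod (period_line_integral a y g)
      \<le> C * cmod (Complex (a + 2*pi) y - Complex a y)"
    unfolding period_line_integral_def using bound
    by (intro contour_integral_bound_linepath contour_integrable_period_line cont)
      (auto simp: closed_segment_horizontal)
  also have "Complex (a + 2*pi) y - Complex a y = of_real (2*pi)"
    by (simp add: complex_eq_iff)
  finally show ?thesis by simp
qed

lemma contour_integral_real_period_shift:
  assumes cont: "continuous_on \<real> g" and per: "\<And>x::complex. x \<in> \<real> \<Longrightarrow> g (x + 2*pi) = g x"
    and a: "0 \<le> a" "a \<le> 2*pi"
  shows "contour_integral (linepath (0::complex) (2*pi)) g = period_line_integral a 0 g"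
proof -
  define L where "L = (\<lambda>x y. contour_integral (linepath (complex_of_real x) (complex_of_real y)) g)"
  have seg_Reals: "closed_segment (complex_of_real x) (complex_of_real y) \<subseteq> \<real>" for x y
    by (intro closed_segment_subset convex_Reals) auto
  have split: "L x z = L x y + L y z" if "x \<le> y" "y \<le> z" for x y z
    unfolding L_def using that
    by (intro contour_integral_split_linepath continuous_on_subset[OF cont seg_Reals])
      (auto simp: closed_segment_same_Im closed_segment_eq_real_ivl)
  have "L (2*pi) (a + 2*pi)
      = contour_integral (linepath ((0::complex) + 2*pi) (complex_of_real a + 2*pi)) g"
    by (simp add: L_def)
  also have "\<dots> = contour_integral (linepath 0 (complex_of_real a)) (\<lambda>w. g (w + 2*pi))"
    by (rule contour_integral_linepath_translate)
  also have "\<dots> = L 0 a"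
    unfolding L_def of_real_0
  proof (rule contour_integral_eq)
    fix w assume "w \<in> path_image (linepath 0 (complex_of_real a))"
    hence "w \<in> \<real>" using seg_Reals[of 0 a] by auto
    thus "g (w + 2*pi) = g w" by (rule per)
  qed
  finally have shift: "L (2*pi) (a + 2*pi) = L 0 a" .
  have "L 0 (2*pi) = L 0 a + L a (2*pi)" "L a (a + 2*pi) = L a (2*pi) + L (2*pi) (a + 2*pi)"
    using a by (auto intro: split)
  hence "L 0 (2*pi) = L a (a + 2*pi)"
    using shift by (simp add: add.commute)
  moreover have "Complex a 0 = of_real a" "Complex (a + 2*pi) 0 = of_real (a + 2*pi)"
    by (simp_all add: complex_eq_iff)
  ultimately show ?thesis by (simp add: L_def period_line_integral_def)
qed

lemma exists_period_window:
  fixes x c :: real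
  assumes "0 < c"
  obtains a and k :: int
  where "0 < a" "a < c" "a < x + of_int k * (2*pi)" "x + of_int k * (2*pi) < a + 2*pi"
proof -
  have "uncountable ({0<..<c} - range (\<lambda>k::int. x + of_int k * (2*pi)))"
    using assms by (intro uncountable_minus_countable) (auto simp: uncountable_open_interval)
  hence "{0<..<c} - range (\<lambda>k::int. x + of_int k * (2*pi)) \<noteq> {}"
    by (metis uncountable_infinite finite.emptyI)
  then obtain a where "a \<in> {0<..<c} - range (\<lambda>k::int. x + of_int k * (2*pi))"
    by blast
  hence a: "0 < a" "a < c" and avoid: "\<And>k::int. x + of_int k * (2*pi) \<noteq> a"
    by auto
  define k where "k = \<lfloor>(a + 2*pi - x) / (2*pi)\<rfloor>"
  have "of_int k \<le> (a + 2*pi - x) / (2*pi)" "(a + 2*pi - x) / (2*pi) < of_int k + 1"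
    unfolding k_def by linarith+
  hence "x + of_int k * (2*pi) \<le> a + 2*pi" "a < x + of_int k * (2*pi)"
    by (simp_all add: field_simps)
  moreover have "x + of_int k * (2*pi) \<noteq> a + 2*pi"
    using avoid[of "k - 1"] by (simp add: algebra_simps)
  ultimately show thesis using a by (intro that[of a k]) auto
qed

section \<open>The periodic trapezoid rule and its kernel\<close>

definition trapezoid_node :: "nat \<Rightarrow> nat \<Rightarrow> complex" where
  "trapezoid_node N j = of_real (2*pi * real j / real N)"

definition periodic_trapezoid :: "nat \<Rightarrow> (complex \<Rightarrow> complex) \<Rightarrow> complex" where
  "periodic_trapezoid N g = of_real (2*pi / real N) * (\<Sum>j=1..N. g (trapezoid_node N j))"

definition nodes_kernel :: "nat \<Rightarrow> complex \<Rightarrow> complex" where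
  "nodes_kernel N w = exp (\<i> * of_nat N * w) - 1"

lemma nodes_kernel_eq_0_iff:
  assumes "N > 0"
  shows "nodes_kernel N w = 0 \<longleftrightarrow> (\<exists>n::int. w = of_real (2*pi * of_int n / real N))"
proof -
  have "nodes_kernel N w = 0 \<longleftrightarrow> Im w = 0 \<and> (\<exists>n::int. real N * Re w = of_int (2 * n) * pi)"
    using assms by (simp add: nodes_kernel_def exp_eq_1)
  also have "\<dots> \<longleftrightarrow> (\<exists>n::int. w = of_real (2*pi * of_int n / real N))"
    using assms by (auto simp: complex_eq_iff field_simps)
  finally show ?thesis .
qed

lemma nodes_kernel_trapezoid_node: "N > 0 \<Longrightarrow> nodes_kernel N (trapezoid_node N j) = 0"
  by (auto simp: nodes_kernel_eq_0_iff trapezoid_node_def intro!: exI[of _ "int j"])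

lemma nodes_kernel_periodic:
  fixes w :: complex
  shows "nodes_kernel N (w + 2*pi) = nodes_kernel N w"
proof -
  have "\<i> * of_nat N * (w + 2*pi) = \<i> * of_nat N * w + \<i> * (of_int (int N) * (of_real pi * 2))"
    by (simp add: algebra_simps)
  thus ?thesis unfolding nodes_kernel_def by (simp only: exp_plus_2pin)
qed

lemma nodes_kernel_eq_0_imp_trapezoid_node:
  assumes "N > 0" "nodes_kernel N w = 0" "0 < Re w" "Re w < 2*pi / N + 2*pi"
  shows "w \<in> trapezoid_node N ` {1..N}"
proof -
  have Npos: "real N > 0" using assms(1) by simp
  obtain n :: int where n: "w = of_real (2*pi * of_int n / real N)"
    using nodes_kernel_eq_0_iff assms(1,2) by auto
  have "0 < 2*pi * of_int n / real N" using n assms(3) by simp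
  hence n0: "n > 0" using Npos by (simp add: zero_less_divide_iff zero_less_mult_iff)
  have "2*pi * of_int n / real N < 2*pi / N + 2*pi" using n assms(4) by simp
  hence "(2*pi) * of_int n < (2*pi) * (1 + real N)" using Npos by (simp add: field_simps)
  hence "n \<le> int N" by (subst (asm) mult_less_cancel_left_pos) auto
  with n0 have "nat n \<in> {1..N}" by auto
  moreover have "w = trapezoid_node N (nat n)" using n n0 by (simp add: trapezoid_node_def)
  ultimately show ?thesis by blast
qed

lemma trapezoid_node_in_box:
  assumes "j \<in> {1..N}" "0 < a" "a < 2*pi / N" "0 < \<beta>"
  shows "trapezoid_node N j \<in> box (Complex a (-\<beta>)) (Complex (a + 2*pi) \<beta>)"
proof -
  have N: "real N > 0" using assms(1) by auto
  have "2*pi / N \<le> 2*pi * j / N" using assms(1) N by (simp add: divide_right_mono)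
  moreover have "2*pi * j / N \<le> 2*pi" using assms(1) N by (simp add: field_simps)
  ultimately show ?thesis using assms by (auto simp: trapezoid_node_def in_box_complex_iff)
qed

lemma periodic_trapezoid_eq_residue_sum:
  assumes "N > 0"
  shows "2*pi*\<i> * (\<Sum>q\<in>trapezoid_node N ` {1..N}. g q / (\<i> * N)) = periodic_trapezoid N g"
proof -
  have "(\<Sum>q\<in>trapezoid_node N ` {1..N}. g q / (\<i> * N)) = (\<Sum>j=1..N. g (trapezoid_node N j)) / (\<i> * N)"
    unfolding sum_divide_distrib
    by (rule sum.reindex_cong[where l = "trapezoid_node N"])
      (use assms in \<open>auto simp: inj_on_def trapezoid_node_def\<close>)
  moreover have "2*pi*\<i> * (X / (\<i> * N)) = of_real (2*pi / N) * X" for X :: complex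
    using assms by (simp add: field_simps)
  ultimately show ?thesis by (simp add: periodic_trapezoid_def)
qed

lemma holomorphic_on_nodes_kernel [holomorphic_intros]: "nodes_kernel N holomorphic_on S"
  unfolding nodes_kernel_def by (intro holomorphic_intros)

lemma has_field_derivative_nodes_kernel:
  assumes "nodes_kernel N q = 0"
  shows "(nodes_kernel N has_field_derivative \<i> * of_nat N) (at q)"
proof -
  have "(nodes_kernel N has_field_derivative exp (\<i> * of_nat N * q) * (\<i> * of_nat N)) (at q)"
    unfolding nodes_kernel_def[abs_def] by (auto intro!: derivative_eq_intros)
  moreover have "exp (\<i> * of_nat N * q) = 1" using assms by (simp add: nodes_kernel_def)
  ultimately show ?thesis by simp
qed

lemma exp_nodes_periodic:
  fixes w :: complex
  shows "exp (\<i> * of_nat N * (w + 2*pi)) = exp (\<i> * of_nat N * w)"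
  using nodes_kernel_periodic[of N w] by (simp add: nodes_kernel_def)

lemma exp_nodes_trapezoid_node: "N > 0 \<Longrightarrow> exp (\<i> * of_nat N * trapezoid_node N j) = 1"
  using nodes_kernel_trapezoid_node[of N j] by (simp add: nodes_kernel_def)

lemma exp_div_nodes_kernel:
  "nodes_kernel N w \<noteq> 0 \<Longrightarrow> exp (\<i> * of_nat N * w) / nodes_kernel N w = 1 / nodes_kernel N w + 1"
  by (simp add: nodes_kernel_def field_simps)

lemma norm_exp_nodes_kernel: "cmod (exp (\<i> * of_nat N * w)) = exp (- real N * Im w)"
  by (simp add: norm_exp_eq_Re)

lemma norm_inverse_nodes_kernel_le:
  assumes "N > 0" "Im w < 0"
  shows "cmod (1 / nodes_kernel N w) \<le> 1 / (exp (N * \<bar>Im w\<bar>) - 1)"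
proof -
  define q where "q = exp (\<i> * of_nat N * w)"
  have q: "cmod q = exp (N * \<bar>Im w\<bar>)" using assms by (simp add: q_def norm_exp_nodes_kernel)
  have pos: "exp (N * \<bar>Im w\<bar>) - 1 > 0" using assms by (simp add: mult_pos_neg)
  have "cmod q \<le> cmod (q - 1) + 1" using norm_triangle_ineq2[of q 1] by simp
  hence "exp (N * \<bar>Im w\<bar>) - 1 \<le> cmod (q - 1)" using q by simp
  thus ?thesis using pos by (simp add: nodes_kernel_def q_def norm_divide frac_le)
qed

lemma norm_exp_div_nodes_kernel_le:
  assumes "N > 0" "Im w > 0"
  shows "cmod (exp (\<i> * of_nat N * w) / nodes_kernel N w) \<le> 1 / (exp (N * \<bar>Im w\<bar>) - 1)"
proof -
  define q where "q = exp (\<i> * of_nat N * w)"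
  have q: "cmod q = exp (- (N * \<bar>Im w\<bar>))" using assms by (simp add: q_def norm_exp_nodes_kernel)
  have pos: "1 - exp (- (N * \<bar>Im w\<bar>)) > 0" using assms by simp
  have "1 \<le> cmod (1 - q) + cmod q" using norm_triangle_ineq2[of 1 q] by simp
  hence "1 - exp (- (N * \<bar>Im w\<bar>)) \<le> cmod (q - 1)" using q by (simp add: norm_minus_commute)
  hence "cmod (q / (q - 1)) \<le> exp (- (N * \<bar>Im w\<bar>)) / (1 - exp (- (N * \<bar>Im w\<bar>)))"
    using q pos by (simp add: norm_divide frac_le)
  also have "\<dots> = 1 / (exp (N * \<bar>Im w\<bar>) - 1)"
    using pos by (simp add: exp_minus field_simps)
  finally show ?thesis by (simp add: nodes_kernel_def q_def)
qed

lemma eventually_exp_error_terms_le: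
  fixes c \<beta> T M C :: real
  assumes "0 < c" "c < \<beta>" "T < C"
  shows "\<forall>\<^sub>F N in sequentially. T / (exp (real N * c) - 1) + 2 * M / (exp (real N * \<beta>) - 1)
            \<le> C * exp (- c * real N)"
proof -
  define g where
    "g N = T * (exp (N * c) / (exp (N * c) - 1)) + 2 * M * (exp (N * c) / (exp (N * \<beta>) - 1))"
    for N :: real
  have "(g \<longlongrightarrow> T * 1 + 2 * M * 0) at_top"
    unfolding g_def using assms by (intro tendsto_intros) real_asymp+
  hence "((\<lambda>N. g (real N)) \<longlongrightarrow> T) sequentially"
    using filterlim_compose filterlim_real_sequentially by fastforce
  hence "\<forall>\<^sub>F N in sequentially. g (real N) < C"
    using assms(3) order_tendstoD(2) by blast
  thus ?thesis
  proof eventually_elim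
    case (elim N)
    have "T / (exp (real N * c) - 1) + 2 * M / (exp (real N * \<beta>) - 1) = exp (- c * real N) * g (real N)"
      by (simp add: g_def field_simps exp_minus mult.commute)
    also have "\<dots> \<le> exp (- c * real N) * C" using elim by (intro mult_left_mono) auto
    finally show ?case by (simp add: mult.commute)
  qed
qed

section \<open>Periodic quotients with one simple pole per period\<close>

locale periodic_simple_pole_quotient =
  fixes A B :: "complex \<Rightarrow> complex" and \<alpha> :: real and s :: complex
  assumes A_holomorphic: "A holomorphic_on strip \<alpha>"
    and B_holomorphic: "B holomorphic_on strip \<alpha>"
    and A_periodic: "\<And>w. w \<in> strip \<alpha> \<Longrightarrow> A (w + 2*pi) = A w"
    and B_periodic: "\<And>w. w \<in> strip \<alpha> \<Longrightarrow> B (w + 2*pi) = B w"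
    and s_in_strip: "s \<in> strip \<alpha>"
    and Im_s_nonzero: "Im s \<noteq> 0"
    and B_eq_0_iff: "\<And>w. w \<in> strip \<alpha> \<Longrightarrow> B w = 0 \<longleftrightarrow> (\<exists>k::int. w = s + of_int k * (2*pi))"
    and deriv_B_nonzero: "deriv B s \<noteq> 0"
begin

definition F :: "complex \<Rightarrow> complex" where
  "F = (\<lambda>w. A w / B w)"

definition R :: complex where
  "R = A s / deriv B s"

lemma B_nonzero: "w \<in> strip \<alpha> \<Longrightarrow> Im w \<noteq> Im s \<Longrightarrow> B w \<noteq> 0"
  using B_eq_0_iff by force

lemma F_holomorphic:
  assumes "T \<subseteq> strip \<alpha>" "\<And>w. w \<in> T \<Longrightarrow> B w \<noteq> 0"
  shows "F holomorphic_on T"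
  unfolding F_def using assms A_holomorphic B_holomorphic
  by (intro holomorphic_intros) (auto intro: holomorphic_on_subset)

lemma F_periodic:
  assumes "w \<in> strip \<alpha>"
  shows "F (w + 2*pi) = F w"
  unfolding F_def by (simp only: A_periodic[OF assms] B_periodic[OF assms])

lemma pole_shift:
  fixes k :: int
  defines "p \<equiv> s + of_int k * (2*pi)"
  shows "p \<in> strip \<alpha>" "B p = 0" "(B has_field_derivative deriv B p) (at p)"
    "deriv B p \<noteq> 0" "A p / deriv B p = R"
proof -
  show p: "p \<in> strip \<alpha>" using s_in_strip by (simp add: p_def strip_def)
  show "B p = 0" using B_eq_0_iff[OF p] by (auto simp: p_def)
  show "(B has_field_derivative deriv B p) (at p)"
    by (rule holomorphic_derivI[OF B_holomorphic open_strip p])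
  have "deriv B p = deriv B s"
    unfolding p_def using deriv_strip_periodic[OF B_holomorphic B_periodic] s_in_strip
    by (rule strip_periodic_int_multiple)
  moreover have "A p = A s"
    unfolding p_def using A_periodic s_in_strip by (rule strip_periodic_int_multiple)
  ultimately show "deriv B p \<noteq> 0" "A p / deriv B p = R"
    using deriv_B_nonzero by (simp_all add: R_def)
qed

text \<open>The range 0 \<le> Re w \<le> 4\<pi> covers every period window [a, a + 2\<pi>] with 0 \<le> a \<le> 2\<pi>.\<close>

lemma F_bounded_on_lines:
  assumes "\<bar>Im s\<bar> < \<beta>" "\<beta> < \<alpha>"
  obtains M where "\<And>w. \<bar>Im w\<bar> = \<beta> \<Longrightarrow> 0 \<le> Re w \<Longrightarrow> Re w \<le> 4*pi \<Longrightarrow> cmod (F w) \<le> M"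
proof -
  define K where "K = closed_segment (Complex 0 (-\<beta>)) (Complex (4*pi) (-\<beta>))
                    \<union> closed_segment (Complex 0 \<beta>) (Complex (4*pi) \<beta>)"
  have K: "w \<in> K" if "\<bar>Im w\<bar> = \<beta>" "0 \<le> Re w" "Re w \<le> 4*pi" for w
    using that by (auto simp: K_def closed_segment_same_Im closed_segment_eq_real_ivl abs_if
        split: if_splits)
  have "K \<subseteq> strip \<alpha>" "\<And>w. w \<in> K \<Longrightarrow> Im w \<noteq> Im s"
    using assms by (auto simp: K_def closed_segment_same_Im strip_def)
  hence "F holomorphic_on K"
    using B_nonzero by (intro F_holomorphic) auto
  hence "compact (F ` K)"
    by (intro compact_continuous_image holomorphic_on_imp_continuous_on)
      (auto simp: K_def intro!: compact_Un compact_segment)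
  then obtain M where "\<And>x. x \<in> F ` K \<Longrightarrow> norm x \<le> M"
    using compact_imp_bounded bounded_iff by metis
  thus thesis using that K by blast
qed

lemma isolating_period_box:
  assumes N: "N \<ge> 1" and a: "0 < a" "a < 2*pi / N"
    and p: "p = s + of_int k * (2*pi)" "a < Re p" "Re p < a + 2*pi" and \<beta>: "\<beta> < \<alpha>"
  obtains S where "open S" "connected S" "S \<subseteq> strip \<alpha>"
    "cbox (Complex a (-\<beta>)) (Complex (a + 2*pi) \<beta>) \<subseteq> S"
    "\<And>w. w \<in> S \<Longrightarrow> B w = 0 \<Longrightarrow> w = p"
    "\<And>w. w \<in> S \<Longrightarrow> nodes_kernel N w = 0 \<Longrightarrow> w \<in> trapezoid_node N ` {1..N}"
proof -
  define \<delta> where "\<delta> = min (min a (2*pi / N - a)) (min (Re p - a) (a + 2*pi - Re p)) / 2"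
  have \<delta>: "0 < \<delta>" "\<delta> < a" "\<delta> < 2*pi / N - a" "\<delta> < Re p - a" "\<delta> < a + 2*pi - Re p"
    using a p unfolding \<delta>_def by auto
  define \<beta>' where "\<beta>' = (\<beta> + \<alpha>) / 2"
  have \<beta>': "\<beta> < \<beta>'" "\<beta>' < \<alpha>" using \<beta> by (auto simp: \<beta>'_def)
  define S where "S = box (Complex (a - \<delta>) (-\<beta>')) (Complex (a + 2*pi + \<delta>) \<beta>')"
  have inS: "w \<in> S \<longleftrightarrow> a - \<delta> < Re w \<and> Re w < a + 2*pi + \<delta> \<and> -\<beta>' < Im w \<and> Im w < \<beta>'" for w
    by (auto simp: S_def in_box_complex_iff)
  show thesis
  proof (rule that)
    show "open S" "connected S" by (auto simp: S_def intro!: convex_connected)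
    show "S \<subseteq> strip \<alpha>" using \<beta>' by (auto simp: inS strip_def abs_less_iff)
    show "cbox (Complex a (-\<beta>)) (Complex (a + 2*pi) \<beta>) \<subseteq> S"
      using \<delta> \<beta>' by (auto simp: inS in_cbox_complex_iff)
  next
    fix w assume w: "w \<in> S" and "B w = 0"
    moreover have "w \<in> strip \<alpha>" using w \<beta>' by (auto simp: inS strip_def abs_less_iff)
    ultimately obtain j :: int where j: "w = s + of_int j * (2*pi)" using B_eq_0_iff by blast
    have "Re w - Re p = of_int (j - k) * (2*pi)" using j p by (simp add: algebra_simps)
    moreover have "-2*pi < Re w - Re p" "Re w - Re p < 2*pi" using w \<delta> unfolding inS by linarith+
    ultimately have "of_int (j - k) * (2*pi) < 1 * (2*pi)" "(-1) * (2*pi) < of_int (j - k) * (2*pi)"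
      by simp_all
    hence "of_int (j - k) < (1::real)" "(-1::real) < of_int (j - k)"
      by (simp_all only: mult_less_cancel_right pi_gt_zero zero_less_mult_iff) simp_all
    hence "j = k" by linarith
    thus "w = p" using j p by simp
  next
    fix w assume "w \<in> S" and "nodes_kernel N w = 0"
    moreover from this(1) have "0 < Re w" "Re w < 2*pi / N + 2*pi" using \<delta> unfolding inS by linarith+
    ultimately show "w \<in> trapezoid_node N ` {1..N}"
      using N by (intro nodes_kernel_eq_0_imp_trapezoid_node) auto
  qed
qed

lemma residue_F_kernel_at_node:
  fixes E :: "complex \<Rightarrow> complex"
  assumes S: "open S" "S \<subseteq> strip \<alpha>" "q \<in> S" and E: "E holomorphic_on UNIV"
    and N: "N > 0" and q: "nodes_kernel N q = 0"
    and B: "\<And>w. w \<in> S \<Longrightarrow> B w \<noteq> 0" and kernel: "\<And>w. w \<in> S \<Longrightarrow> w \<noteq> q \<Longrightarrow> nodes_kernel N w \<noteq> 0"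
  shows "residue (\<lambda>w. F w * (E w / nodes_kernel N w)) q = F q * E q / (\<i> * N)"
proof -
  have "residue (\<lambda>w. (F w * E w) / nodes_kernel N w) q = (F q * E q) / (\<i> * N)"
  proof (rule residue_quotient_simple_zero[OF S(1,3)])
    show "(\<lambda>w. F w * E w) holomorphic_on S"
      using S(2) B by (intro holomorphic_intros F_holomorphic holomorphic_on_subset[OF E]) auto
    show "(nodes_kernel N has_field_derivative \<i> * N) (at q)"
      using q by (rule has_field_derivative_nodes_kernel)
  qed (use N q kernel in \<open>auto intro: holomorphic_intros\<close>)
  thus ?thesis by simp
qed

lemma residue_F_kernel_at_pole:
  fixes E :: "complex \<Rightarrow> complex"
  assumes p: "p = s + of_int k * (2*pi)"
    and S: "open S" "S \<subseteq> strip \<alpha>" "p \<in> S" and E: "E holomorphic_on UNIV"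
    and kernel: "\<And>w. w \<in> S \<Longrightarrow> nodes_kernel N w \<noteq> 0" and B: "\<And>w. w \<in> S \<Longrightarrow> w \<noteq> p \<Longrightarrow> B w \<noteq> 0"
  shows "residue (\<lambda>w. F w * (E w / nodes_kernel N w)) p = R * (E p / nodes_kernel N p)"
proof -
  have "residue (\<lambda>w. A w * (E w / nodes_kernel N w) / B w) p
      = A p * (E p / nodes_kernel N p) / deriv B p"
  proof (rule residue_quotient_simple_zero[OF S(1,3)])
    show "(\<lambda>w. A w * (E w / nodes_kernel N w)) holomorphic_on S"
      using S(2) kernel
      by (intro holomorphic_intros holomorphic_on_subset[OF A_holomorphic]
          holomorphic_on_subset[OF E]) auto
    show "B holomorphic_on S" using B_holomorphic S(2) by (rule holomorphic_on_subset)
  qed (use pole_shift[of k, folded p] B in auto)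
  moreover have "(\<lambda>w. F w * (E w / nodes_kernel N w)) = (\<lambda>w. A w * (E w / nodes_kernel N w) / B w)"
    by (simp add: F_def fun_eq_iff)
  moreover have "A p / deriv B p = R" using pole_shift(5)[of k, folded p] .
  ultimately show ?thesis by (simp only: times_divide_eq_left[symmetric])
qed

lemma residue_sum_F_kernel:
  fixes E :: "complex \<Rightarrow> complex"
  assumes N: "N > 0" and p: "p = s + of_int k * (2*pi)"
    and S: "open S" "S \<subseteq> strip \<alpha>" "insert p (trapezoid_node N ` {1..N}) \<subseteq> S"
    and B: "\<And>w. w \<in> S \<Longrightarrow> B w = 0 \<Longrightarrow> w = p"
    and kernel: "\<And>w. w \<in> S \<Longrightarrow> nodes_kernel N w = 0 \<Longrightarrow> w \<in> trapezoid_node N ` {1..N}"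
    and E: "E holomorphic_on UNIV" "\<And>j. E (trapezoid_node N j) = 1"
  shows "(\<Sum>q\<in>insert p (trapezoid_node N ` {1..N}). residue (\<lambda>w. F w * (E w / nodes_kernel N w)) q)
       = R * (E p / nodes_kernel N p) + (\<Sum>q\<in>trapezoid_node N ` {1..N}. F q / (\<i> * N))"
proof -
  define nodes where "nodes = trapezoid_node N ` {1..N}"
  define pts where "pts = insert p nodes"
  have "Im p = Im s" using p by simp
  hence p_notin: "p \<notin> nodes" using Im_s_nonzero by (auto simp: nodes_def trapezoid_node_def)
  have open_S: "open (S - (pts - {q}))" for q
    using S(1) by (intro open_Diff finite_imp_closed) (auto simp: pts_def nodes_def)
  have nonzero: "B w \<noteq> 0" "nodes_kernel N w \<noteq> 0" if "w \<in> S - pts" for w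
    using that B kernel by (auto simp: pts_def nodes_def)
  have "residue (\<lambda>w. F w * (E w / nodes_kernel N w)) q = F q / (\<i> * N)" if q: "q \<in> nodes" for q
  proof -
    have "residue (\<lambda>w. F w * (E w / nodes_kernel N w)) q = F q * E q / (\<i> * N)"
    proof (rule residue_F_kernel_at_node[OF open_S])
      show "q \<in> S - (pts - {q})" using q S(3) by (auto simp: nodes_def)
      show "nodes_kernel N q = 0" using q N by (auto simp: nodes_def nodes_kernel_trapezoid_node)
    qed (use S(2) B E(1) N nonzero q p_notin in auto)
    thus ?thesis using q E(2) by (auto simp: nodes_def)
  qed
  moreover have "residue (\<lambda>w. F w * (E w / nodes_kernel N w)) p = R * (E p / nodes_kernel N p)"
  proof (rule residue_F_kernel_at_pole[OF p open_S _ _ E(1)])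
    show "p \<in> S - (pts - {p})" using S(3) by auto
  qed (use S(2) kernel nonzero p_notin in \<open>auto simp: nodes_def\<close>)
  ultimately show ?thesis
    using p_notin by (simp add: nodes_def)
qed

lemma period_line_integral_kernel_residues:
  fixes E :: "complex \<Rightarrow> complex"
  assumes N: "N \<ge> 1" and a: "0 < a" "a < 2*pi / N"
    and p: "p = s + of_int k * (2*pi)" "a < Re p" "Re p < a + 2*pi"
    and \<beta>: "\<bar>Im s\<bar> < \<beta>" "\<beta> < \<alpha>"
    and E: "E holomorphic_on UNIV" "\<And>w::complex. E (w + 2*pi) = E w" "\<And>j. E (trapezoid_node N j) = 1"
  defines "G \<equiv> \<lambda>w. F w * (E w / nodes_kernel N w)"
  shows "period_line_integral a (-\<beta>) G - period_line_integral a \<beta> G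
       = periodic_trapezoid N F + 2*pi*\<i> * (R * (E p / nodes_kernel N p))"
proof -
  obtain S where S: "open S" "connected S" "S \<subseteq> strip \<alpha>"
      "cbox (Complex a (-\<beta>)) (Complex (a + 2*pi) \<beta>) \<subseteq> S"
      "\<And>w. w \<in> S \<Longrightarrow> B w = 0 \<Longrightarrow> w = p"
      "\<And>w. w \<in> S \<Longrightarrow> nodes_kernel N w = 0 \<Longrightarrow> w \<in> trapezoid_node N ` {1..N}"
    using isolating_period_box[OF N a p \<beta>(2)] by blast
  have Npos: "N > 0" using N by simp
  define pts where "pts = insert p (trapezoid_node N ` {1..N})"
  have pts_box: "pts \<subseteq> box (Complex a (-\<beta>)) (Complex (a + 2*pi) \<beta>)"
    using a \<beta> p trapezoid_node_in_box by (auto simp: pts_def in_box_complex_iff abs_less_iff)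
  have "period_line_integral a (-\<beta>) G - period_line_integral a \<beta> G = 2*pi*\<i> * (\<Sum>q\<in>pts. residue G q)"
  proof (rule period_line_integral_residue_theorem[OF S(1,2) _ _ S(4) pts_box])
    show "G holomorphic_on S - pts"
      unfolding G_def using S(3,5,6)
      by (intro holomorphic_intros F_holomorphic holomorphic_on_subset[OF E(1)]) (auto simp: pts_def)
    show "G (w + 2*pi) = G w" if "w \<in> cbox (Complex a (-\<beta>)) (Complex (a + 2*pi) \<beta>)" for w :: complex
    proof -
      have "w \<in> strip \<alpha>" using that S(3,4) by auto
      hence "F (w + 2*pi) = F w" by (rule F_periodic)
      moreover have "E (w + 2*pi) = E w" by (rule E(2))
      moreover have "nodes_kernel N (w + 2*pi) = nodes_kernel N w" by (rule nodes_kernel_periodic)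
      ultimately show ?thesis by (simp only: G_def)
    qed
  qed (use \<beta> in \<open>auto simp: pts_def\<close>)
  also have "(\<Sum>q\<in>pts. residue G q)
      = R * (E p / nodes_kernel N p) + (\<Sum>q\<in>trapezoid_node N ` {1..N}. F q / (\<i> * N))"
  proof -
    have "pts \<subseteq> S" using pts_box box_subset_cbox S(4) by blast
    thus ?thesis
      unfolding pts_def G_def by (rule residue_sum_F_kernel[OF Npos p(1) S(1,3) _ S(5,6) E(1,3)])
  qed
  also have "2*pi*\<i> * (R * (E p / nodes_kernel N p) + (\<Sum>q\<in>trapezoid_node N ` {1..N}. F q / (\<i> * N)))
      = periodic_trapezoid N F + 2*pi*\<i> * (R * (E p / nodes_kernel N p))"
    using periodic_trapezoid_eq_residue_sum[OF Npos, of F] by (simp only: distrib_left add.commute)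
  finally show ?thesis .
qed

lemma alpha_pos: "0 < \<alpha>"
  using s_in_strip by (auto simp: strip_def)

lemma continuous_on_horizontal_line_F:
  assumes "\<bar>Im s\<bar> < \<bar>y\<bar>" "\<bar>y\<bar> < \<alpha>"
  shows "continuous_on {w. Im w = y} F"
  using assms by (intro holomorphic_on_imp_continuous_on F_holomorphic B_nonzero) (auto simp: strip_def)

lemma continuous_on_horizontal_line_F_kernel:
  assumes "\<bar>Im s\<bar> < \<bar>y\<bar>" "\<bar>y\<bar> < \<alpha>" "N > 0" "g holomorphic_on UNIV"
  shows "continuous_on {w. Im w = y} (\<lambda>w. F w * (g w / nodes_kernel N w))"
proof -
  have "continuous_on {w. Im w = y} g" "continuous_on {w. Im w = y} (nodes_kernel N)"
    by (intro holomorphic_on_imp_continuous_on holomorphic_on_subset[OF assms(4)]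
        holomorphic_on_nodes_kernel; simp)+
  moreover have "nodes_kernel N w \<noteq> 0" if "Im w = y" for w
    using that assms(1,3) by (auto simp: nodes_kernel_eq_0_iff)
  ultimately show ?thesis
    using continuous_on_horizontal_line_F[OF assms(1,2)]
    by (intro continuous_on_mult continuous_on_divide) auto
qed

lemma norm_period_line_integral_F_kernel_le:
  assumes y: "\<bar>y\<bar> = \<beta>" "\<bar>Im s\<bar> < \<beta>" "\<beta> < \<alpha>" and a: "0 \<le> a" "a \<le> 2*pi" and N: "N > 0"
    and M: "\<And>w. \<bar>Im w\<bar> = \<beta> \<Longrightarrow> 0 \<le> Re w \<Longrightarrow> Re w \<le> 4*pi \<Longrightarrow> cmod (F w) \<le> M"
    and g: "g holomorphic_on UNIV" "\<And>w. Im w = y \<Longrightarrow> cmod (g w / nodes_kernel N w) \<le> b"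
  shows "cmod (period_line_integral a y (\<lambda>w. F w * (g w / nodes_kernel N w))) \<le> M * b * (2*pi)"
proof (rule norm_period_line_integral_le)
  show "continuous_on {w. Im w = y} (\<lambda>w. F w * (g w / nodes_kernel N w))"
    using y N g(1) by (intro continuous_on_horizontal_line_F_kernel) auto
  fix w assume w: "Im w = y" "a \<le> Re w" "Re w \<le> a + 2*pi"
  have "cmod (F w) \<le> M" using w y a by (intro M) auto
  moreover from this have "0 \<le> M" by (rule order_trans[OF norm_ge_zero])
  ultimately show "cmod (F w * (g w / nodes_kernel N w)) \<le> M * b"
    unfolding norm_mult using g(2)[OF w(1)] by (intro mult_mono) auto
qed

lemma period_line_integral_F_exp_kernel:
  assumes "\<bar>Im s\<bar> < \<bar>y\<bar>" "\<bar>y\<bar> < \<alpha>" "N > 0"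
  shows "period_line_integral a y (\<lambda>w. F w * (exp (\<i> * of_nat N * w) / nodes_kernel N w))
       = period_line_integral a y (\<lambda>w. F w * (1 / nodes_kernel N w)) + period_line_integral a y F"
proof -
  have "nodes_kernel N w \<noteq> 0" if "Im w = y" for w
    using that assms(1,3) by (auto simp: nodes_kernel_eq_0_iff)
  hence "period_line_integral a y (\<lambda>w. F w * (exp (\<i> * of_nat N * w) / nodes_kernel N w))
       = period_line_integral a y (\<lambda>w. F w * (1 / nodes_kernel N w) + F w)"
    by (intro period_line_integral_cong) (simp add: exp_div_nodes_kernel distrib_left)
  also have "\<dots> = period_line_integral a y (\<lambda>w. F w * (1 / nodes_kernel N w))
      + period_line_integral a y F"
    using assms
    by (intro period_line_integral_add continuous_on_horizontal_line_F_kernel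
        continuous_on_horizontal_line_F) auto
  finally show ?thesis .
qed

lemma contour_integral_F_eq_period_line_integral:
  assumes "0 \<le> a" "a \<le> 2*pi"
  shows "contour_integral (linepath (0::complex) (2*pi)) F = period_line_integral a 0 F"
proof (rule contour_integral_real_period_shift)
  show "continuous_on \<real> F"
    using Reals_subset_strip[OF alpha_pos] B_nonzero Im_s_nonzero
    by (intro holomorphic_on_imp_continuous_on F_holomorphic) (auto simp: complex_is_Real_iff)
  show "F (x + 2*pi) = F x" if "x \<in> \<real>" for x :: complex
    using that Reals_subset_strip[OF alpha_pos] by (intro F_periodic) auto
qed (use assms in auto)

lemma trapezoid_error_pole_above:
  assumes N: "N \<ge> 1" and a: "0 < a" "a < 2*pi / N"
    and p: "p = s + of_int k * (2*pi)" "a < Re p" "Re p < a + 2*pi"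
    and \<beta>: "\<bar>Im s\<bar> < \<beta>" "\<beta> < \<alpha>" and above: "Im s > 0"
  shows "periodic_trapezoid N F - period_line_integral a 0 F
       = period_line_integral a (-\<beta>) (\<lambda>w. F w * (1 / nodes_kernel N w))
       - period_line_integral a \<beta> (\<lambda>w. F w * (exp (\<i> * of_nat N * w) / nodes_kernel N w))
       - 2*pi*\<i> * (R * (exp (\<i> * of_nat N * p) / nodes_kernel N p))"
proof -
  have residues: "period_line_integral a (-\<beta>) (\<lambda>w. F w * (exp (\<i> * of_nat N * w) / nodes_kernel N w))
      - period_line_integral a \<beta> (\<lambda>w. F w * (exp (\<i> * of_nat N * w) / nodes_kernel N w))
      = periodic_trapezoid N F + 2*pi*\<i> * (R * (exp (\<i> * of_nat N * p) / nodes_kernel N p))"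
    using N by (intro period_line_integral_kernel_residues[OF N a p \<beta>] holomorphic_intros
        exp_nodes_periodic exp_nodes_trapezoid_node) auto
  have shift: "period_line_integral a (-\<beta>) F = period_line_integral a 0 F"
  proof (rule period_line_integral_eq_of_holomorphic[where c = "-\<alpha>" and d = "Im s"])
    show "F holomorphic_on {w. -\<alpha> < Im w \<and> Im w < Im s}"
      using s_in_strip B_nonzero by (intro F_holomorphic) (auto simp: strip_def)
    show "F (w + 2*pi) = F w" if "-\<alpha> < Im w" "Im w < Im s" for w
      using that s_in_strip by (intro F_periodic) (auto simp: strip_def)
  qed (use \<beta> above in auto)
  have split: "period_line_integral a (-\<beta>) (\<lambda>w. F w * (exp (\<i> * of_nat N * w) / nodes_kernel N w))
      = period_line_integral a (-\<beta>) (\<lambda>w. F w * (1 / nodes_kernel N w)) + period_line_integral a (-\<beta>) F"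
    using \<beta> N by (intro period_line_integral_F_exp_kernel) auto
  have rearrange: "L - U = T + c \<Longrightarrow> L = X + J \<Longrightarrow> T - J = X - U - c" for L U T c X J :: complex
    by (simp add: algebra_simps)
  show ?thesis by (rule rearrange[OF residues split[unfolded shift]])
qed

lemma trapezoid_error_pole_below:
  assumes N: "N \<ge> 1" and a: "0 < a" "a < 2*pi / N"
    and p: "p = s + of_int k * (2*pi)" "a < Re p" "Re p < a + 2*pi"
    and \<beta>: "\<bar>Im s\<bar> < \<beta>" "\<beta> < \<alpha>" and below: "Im s < 0"
  shows "periodic_trapezoid N F - period_line_integral a 0 F
       = period_line_integral a (-\<beta>) (\<lambda>w. F w * (1 / nodes_kernel N w))
       - period_line_integral a \<beta> (\<lambda>w. F w * (exp (\<i> * of_nat N * w) / nodes_kernel N w))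
       - 2*pi*\<i> * (R * (1 / nodes_kernel N p))"
proof -
  have residues: "period_line_integral a (-\<beta>) (\<lambda>w. F w * (1 / nodes_kernel N w))
      - period_line_integral a \<beta> (\<lambda>w. F w * (1 / nodes_kernel N w))
      = periodic_trapezoid N F + 2*pi*\<i> * (R * (1 / nodes_kernel N p))"
    by (rule period_line_integral_kernel_residues[where E = "\<lambda>_. 1", OF N a p \<beta>]) auto
  have shift: "period_line_integral a 0 F = period_line_integral a \<beta> F"
  proof (rule period_line_integral_eq_of_holomorphic[where c = "Im s" and d = \<alpha>])
    show "F holomorphic_on {w. Im s < Im w \<and> Im w < \<alpha>}"
      using s_in_strip B_nonzero by (intro F_holomorphic) (auto simp: strip_def)
    show "F (w + 2*pi) = F w" if "Im s < Im w" "Im w < \<alpha>" for w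
      using that s_in_strip by (intro F_periodic) (auto simp: strip_def)
  qed (use \<beta> below in auto)
  have split: "period_line_integral a \<beta> (\<lambda>w. F w * (exp (\<i> * of_nat N * w) / nodes_kernel N w))
      = period_line_integral a \<beta> (\<lambda>w. F w * (1 / nodes_kernel N w)) + period_line_integral a \<beta> F"
    using \<beta> N by (intro period_line_integral_F_exp_kernel) auto
  have rearrange: "L - U = T + c \<Longrightarrow> Q = U + J \<Longrightarrow> T - J = L - Q - c" for L U T c Q J :: complex
    by (simp add: algebra_simps)
  show ?thesis by (rule rearrange[OF residues split[folded shift]])
qed

lemma trapezoid_error_representation:
  assumes N: "N \<ge> 1" and \<beta>: "\<bar>Im s\<bar> < \<beta>" "\<beta> < \<alpha>"
  obtains a K where "0 \<le> a" "a \<le> 2*pi" "cmod K \<le> 1 / (exp (N * \<bar>Im s\<bar>) - 1)"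
    "periodic_trapezoid N F - contour_integral (linepath (0::complex) (2*pi)) F
       = period_line_integral a (-\<beta>) (\<lambda>w. F w * (1 / nodes_kernel N w))
       - period_line_integral a \<beta> (\<lambda>w. F w * (exp (\<i> * of_nat N * w) / nodes_kernel N w))
       - 2*pi*\<i> * (R * K)"
proof -
  have Npos: "N > 0" using N by simp
  \<comment> \<open>The vertical sides Re w = a, a + 2\<pi> must avoid the nodes and the poles s + 2\<pi>k.\<close>
  obtain a k where a: "0 < a" "a < 2*pi / N"
    and k: "a < Re s + of_int k * (2*pi)" "Re s + of_int k * (2*pi) < a + 2*pi"
    using exists_period_window[of "2*pi / N" "Re s"] Npos by auto
  define p where "p = s + of_int k * (2*pi)"
  have p: "a < Re p" "Re p < a + 2*pi" "Im p = Im s" using k by (simp_all add: p_def)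
  have "2*pi / N \<le> 2*pi" using N by (simp add: field_simps)
  hence a_le: "a \<le> 2*pi" using a by linarith
  have I: "contour_integral (linepath (0::complex) (2*pi)) F = period_line_integral a 0 F"
    using a a_le by (intro contour_integral_F_eq_period_line_integral) auto
  consider "Im s > 0" | "Im s < 0" using Im_s_nonzero by linarith
  thus thesis
  proof cases
    case 1
    have "cmod (exp (\<i> * of_nat N * p) / nodes_kernel N p) \<le> 1 / (exp (N * \<bar>Im s\<bar>) - 1)"
      using norm_exp_div_nodes_kernel_le[OF Npos, of p] p(3) 1 by simp
    from that[OF _ a_le this trapezoid_error_pole_above[OF N a p_def p(1,2) \<beta> 1, folded I]]
    show thesis using a by simp
  next
    case 2
    have "cmod (1 / nodes_kernel N p) \<le> 1 / (exp (N * \<bar>Im s\<bar>) - 1)"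
      using norm_inverse_nodes_kernel_le[OF Npos, of p] p(3) 2 by simp
    from that[OF _ a_le this trapezoid_error_pole_below[OF N a p_def p(1,2) \<beta> 2, folded I]]
    show thesis using a by simp
  qed
qed

lemma trapezoid_error_bound:
  assumes N: "N \<ge> 1" and \<beta>: "\<bar>Im s\<bar> < \<beta>" "\<beta> < \<alpha>"
    and M: "\<And>w. \<bar>Im w\<bar> = \<beta> \<Longrightarrow> 0 \<le> Re w \<Longrightarrow> Re w \<le> 4*pi \<Longrightarrow> cmod (F w) \<le> M"
  shows "cmod (periodic_trapezoid N F - contour_integral (linepath (0::complex) (2*pi)) F)
         \<le> 2*pi * (cmod R / (exp (N * \<bar>Im s\<bar>) - 1) + 2*M / (exp (N * \<beta>) - 1))"
proof -
  obtain a K where a: "0 \<le> a" "a \<le> 2*pi" and K: "cmod K \<le> 1 / (exp (N * \<bar>Im s\<bar>) - 1)"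
    and eq: "periodic_trapezoid N F - contour_integral (linepath (0::complex) (2*pi)) F
       = period_line_integral a (-\<beta>) (\<lambda>w. F w * (1 / nodes_kernel N w))
       - period_line_integral a \<beta> (\<lambda>w. F w * (exp (\<i> * of_nat N * w) / nodes_kernel N w))
       - 2*pi*\<i> * (R * K)"
    using trapezoid_error_representation[OF N \<beta>] by blast
  have Npos: "N > 0" using N by simp
  have "\<beta> > 0" using \<beta> by linarith
  define b where "b = 1 / (exp (N * \<beta>) - 1)"
  have bottom: "cmod (period_line_integral a (-\<beta>) (\<lambda>w. F w * (1 / nodes_kernel N w))) \<le> M * b * (2*pi)"
  proof (rule norm_period_line_integral_F_kernel_le[OF _ \<beta> a Npos M])
    show "cmod (1 / nodes_kernel N w) \<le> b" if "Im w = -\<beta>" for w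
      using norm_inverse_nodes_kernel_le[OF Npos, of w] that \<open>\<beta> > 0\<close> by (simp add: b_def)
  qed (use \<open>\<beta> > 0\<close> in auto)
  have top: "cmod (period_line_integral a \<beta> (\<lambda>w. F w * (exp (\<i> * of_nat N * w) / nodes_kernel N w)))
      \<le> M * b * (2*pi)"
  proof (rule norm_period_line_integral_F_kernel_le[OF _ \<beta> a Npos M])
    show "cmod (exp (\<i> * of_nat N * w) / nodes_kernel N w) \<le> b" if "Im w = \<beta>" for w
      using norm_exp_div_nodes_kernel_le[OF Npos, of w] that \<open>\<beta> > 0\<close> by (simp add: b_def)
  qed (use \<open>\<beta> > 0\<close> in \<open>auto intro!: holomorphic_intros\<close>)
  have "cmod (2*pi*\<i> * (R * K)) = 2*pi * (cmod R * cmod K)" by (simp add: norm_mult)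
  also have "\<dots> \<le> 2*pi * (cmod R * (1 / (exp (N * \<bar>Im s\<bar>) - 1)))"
    using K by (intro mult_left_mono) auto
  finally have residue_term: "cmod (2*pi*\<i> * (R * K)) \<le> 2*pi * (cmod R / (exp (N * \<bar>Im s\<bar>) - 1))"
    by simp
  have "cmod (periodic_trapezoid N F - contour_integral (linepath (0::complex) (2*pi)) F)
      \<le> M * b * (2*pi) + M * b * (2*pi) + 2*pi * (cmod R / (exp (N * \<bar>Im s\<bar>) - 1))"
    unfolding eq using bottom top residue_term norm_triangle_ineq4 norm_triangle_ineq4
    by (smt (verit, best))
  thus ?thesis by (simp add: b_def algebra_simps)
qed

lemma trapezoid_error_decay:
  assumes "cmod R < C"
  shows "\<forall>\<^sub>F N in sequentially.
           cmod (periodic_trapezoid N F - contour_integral (linepath (0::complex) (2*pi)) F)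
           \<le> 2*pi * (C * exp (- \<bar>Im s\<bar> * N))"
proof -
  define \<beta> where "\<beta> = (\<bar>Im s\<bar> + \<alpha>) / 2"
  have \<beta>: "\<bar>Im s\<bar> < \<beta>" "\<beta> < \<alpha>" using s_in_strip by (auto simp: \<beta>_def strip_def)
  obtain M where M: "\<And>w. \<bar>Im w\<bar> = \<beta> \<Longrightarrow> 0 \<le> Re w \<Longrightarrow> Re w \<le> 4*pi \<Longrightarrow> cmod (F w) \<le> M"
    using F_bounded_on_lines[OF \<beta>] by blast
  have "\<forall>\<^sub>F N in sequentially. cmod R / (exp (N * \<bar>Im s\<bar>) - 1) + 2*M / (exp (N * \<beta>) - 1)
          \<le> C * exp (- \<bar>Im s\<bar> * N)"
    using Im_s_nonzero \<beta> assms by (intro eventually_exp_error_terms_le) auto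
  moreover have "\<forall>\<^sub>F N in sequentially. N \<ge> 1" by (rule eventually_ge_at_top)
  ultimately show ?thesis
  proof eventually_elim
    case (elim N)
    show ?case
      by (rule order_trans[OF trapezoid_error_bound[OF elim(2) \<beta> M]])
        (use elim(1) in \<open>auto intro: mult_left_mono\<close>)
  qed
qed

end

section \<open>The double-layer potential\<close>

lemma deriv_nonzero_of_injective_mod_period:
  assumes hol: "Z holomorphic_on strip \<alpha>" and s: "s \<in> strip \<alpha>"
    and inj: "\<And>s1 s2. s1 \<in> strip \<alpha> \<Longrightarrow> s2 \<in> strip \<alpha> \<Longrightarrow> Z s1 = Z s2 \<Longrightarrow>
                \<exists>k::int. s1 = s2 + of_int k * (2*pi)"
  shows "deriv Z s \<noteq> 0"
proof -
  define r where "r = min pi (\<alpha> - \<bar>Im s\<bar>)"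
  have r: "0 < r" "r \<le> pi" using s by (auto simp: r_def strip_def)
  have ball: "ball s r \<subseteq> strip \<alpha>"
  proof
    fix w assume "w \<in> ball s r"
    hence "\<bar>Im (w - s)\<bar> < r"
      using abs_Im_le_cmod[of "w - s"] by (simp add: dist_norm norm_minus_commute)
    thus "w \<in> strip \<alpha>" by (auto simp: r_def strip_def)
  qed
  have "inj_on Z (ball s r)"
  proof (rule inj_onI)
    fix w1 w2 assume w: "w1 \<in> ball s r" "w2 \<in> ball s r" and "Z w1 = Z w2"
    then obtain k :: int where k: "w1 = w2 + of_int k * (2*pi)"
      using inj ball by blast
    have "cmod (w1 - w2) \<le> cmod (w1 - s) + cmod (s - w2)"
      using norm_triangle_ineq[of "w1 - s" "s - w2"] by simp
    also have "\<dots> < 2 * pi"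
      using w r by (simp add: dist_norm norm_minus_commute)
    finally have "\<bar>of_int k\<bar> * (2*pi) < 1 * (2*pi)"
      using k by (simp add: norm_mult)
    hence "\<bar>of_int k\<bar> < (1::real)" by (simp only: mult_less_cancel_right) simp
    hence "k = 0" by linarith
    thus "w1 = w2" using k by simp
  qed
  thus ?thesis
    using holomorphic_injective_imp_regular[OF holomorphic_on_subset[OF hol ball] open_ball] r
    by simp
qed

lemma bcurve_covers_real_line:
  assumes a: "0 < a" and per: "\<And>w. w \<in> strip a \<Longrightarrow> Z (w + 2*pi) = Z w"
  shows "Z (of_real t) \<in> path_image (bcurve Z)"
proof -
  define k where "k = \<lfloor>t / (2*pi)\<rfloor>"
  define t' where "t' = t - of_int k * (2*pi)"
  have "of_int k \<le> t / (2*pi)" "t / (2*pi) < of_int k + 1" unfolding k_def by linarith+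
  hence t': "0 \<le> t'" "t' < 2*pi" unfolding t'_def by (simp_all add: field_simps)
  have "Z (of_real t) = Z (complex_of_real t' + of_int k * (2*pi))" by (simp add: t'_def)
  also have "\<dots> = Z (of_real t')"
    using Reals_subset_strip[OF a] by (intro strip_periodic_int_multiple[where g = Z, OF per]) auto
  also have "\<dots> = bcurve Z (t' / (2*pi))" by (simp add: bcurve_def)
  moreover have "t' / (2*pi) \<in> {0..1}" using t' by simp
  ultimately show ?thesis unfolding path_image_def by simp
qed

lemma layer_integrand_periodic_simple_pole:
  fixes Z \<tau> :: "complex \<Rightarrow> complex"
  assumes Z_holomorphic: "Z holomorphic_on strip \<alpha>"
    and Z_periodic: "\<And>t::real. Z (of_real (t + 2*pi)) = Z (of_real t)"
    and Z_inj: "\<And>s1 s2. s1 \<in> strip \<alpha> \<Longrightarrow> s2 \<in> strip \<alpha> \<Longrightarrow> Z s1 = Z s2 \<Longrightarrow>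
                  \<exists>k::int. s1 = s2 + of_int k * (2*pi)"
    and \<tau>_analytic: "\<tau> analytic_on Z ` strip \<alpha>"
    and s: "s \<in> strip \<alpha>" and off_curve: "Z s \<notin> path_image (bcurve Z)"
  shows "periodic_simple_pole_quotient (\<lambda>w. \<tau> (Z w) * deriv Z w) (\<lambda>w. Z w - Z s) \<alpha> s"
proof -
  have \<alpha>: "0 < \<alpha>" using s by (auto simp: strip_def)
  have Z_per: "Z (w + 2*pi) = Z w" if "w \<in> strip \<alpha>" for w
    by (rule strip_periodic_of_real_periodic[OF \<alpha> Z_holomorphic Z_periodic that])
  obtain U where U: "open U" "Z ` strip \<alpha> \<subseteq> U" "\<tau> holomorphic_on U"
    using \<tau>_analytic analytic_on_holomorphic by metis
  show ?thesis
  proof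
    show "(\<lambda>w. \<tau> (Z w) * deriv Z w) holomorphic_on strip \<alpha>"
      using holomorphic_on_compose_gen[OF Z_holomorphic U(3) U(2)]
        holomorphic_deriv[OF Z_holomorphic open_strip]
      by (intro holomorphic_on_mult) (simp_all add: o_def)
    show "(\<lambda>w. Z w - Z s) holomorphic_on strip \<alpha>"
      using Z_holomorphic by (intro holomorphic_intros)
    show "\<tau> (Z (w + 2*pi)) * deriv Z (w + 2*pi) = \<tau> (Z w) * deriv Z w" if "w \<in> strip \<alpha>" for w
      using Z_per[OF that] deriv_strip_periodic[OF Z_holomorphic Z_per that] by simp
    show "Z (w + 2*pi) - Z s = Z w - Z s" if "w \<in> strip \<alpha>" for w
      using Z_per[OF that] by simp
    show "s \<in> strip \<alpha>" by (rule s)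
    show "Im s \<noteq> 0"
    proof
      assume "Im s = 0"
      hence "s = of_real (Re s)" by (simp add: complex_eq_iff)
      hence "Z s \<in> path_image (bcurve Z)"
        using bcurve_covers_real_line[where Z = Z, OF \<alpha> Z_per, of "Re s"] by metis
      with off_curve show False by contradiction
    qed
    show "Z w - Z s = 0 \<longleftrightarrow> (\<exists>k::int. w = s + of_int k * (2*pi))" if w: "w \<in> strip \<alpha>" for w
    proof
      assume "Z w - Z s = 0"
      thus "\<exists>k::int. w = s + of_int k * (2*pi)" using Z_inj[OF w s] by simp
    next
      assume "\<exists>k::int. w = s + of_int k * (2*pi)"
      then obtain k :: int where "w = s + of_int k * (2*pi)" by blast
      thus "Z w - Z s = 0" using strip_periodic_int_multiple[where g = Z, OF Z_per s, of k] by simp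
    qed
    have "((\<lambda>w. Z w - Z s) has_field_derivative deriv Z s - 0) (at s)"
      by (intro DERIV_diff holomorphic_derivI[OF Z_holomorphic open_strip s] DERIV_const)
    hence "deriv (\<lambda>w. Z w - Z s) s = deriv Z s" by (simp add: DERIV_imp_deriv)
    moreover have "deriv Z s \<noteq> 0"
      using Z_holomorphic s Z_inj by (rule deriv_nonzero_of_injective_mod_period)
    ultimately show "deriv (\<lambda>w. Z w - Z s) s \<noteq> 0" by simp
  qed
qed

lemma layer_err_eq_trapezoid_error:
  fixes Z \<tau> :: "complex \<Rightarrow> complex" and z :: complex
  assumes "N \<ge> 1"
  defines "f \<equiv> \<lambda>w. \<tau> (Z w) * deriv Z w / (Z w - z)"
  shows "layer_err Z \<tau> N z
    = Re (-(1 / (2*pi*\<i>))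
          * (periodic_trapezoid N f - contour_integral (linepath (0::complex) (2*pi)) f))"
proof -
  have "(\<Sum>j=1..N. let s = complex_of_real (2 * pi * real j / real N) in \<tau> (Z s) / (Z s - z) * deriv Z s)
      = (\<Sum>j=1..N. f (trapezoid_node N j))"
    by (simp add: Let_def f_def trapezoid_node_def)
  hence "layer_vN Z \<tau> N z = -(1 / (2*pi*\<i>)) * periodic_trapezoid N f"
    using assms(1) by (simp add: layer_vN_def periodic_trapezoid_def field_simps)
  moreover have "contour_integral (linepath (0::complex) (2*pi)) f
      = integral {0..2*pi} (\<lambda>t. f (of_real t))"
    by (subst contour_integral_linepath_Reals_eq) auto
  hence "layer_v Z \<tau> z = -(1 / (2*pi*\<i>)) * contour_integral (linepath (0::complex) (2*pi)) f"
    by (simp add: layer_v_def f_def)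
  ultimately show ?thesis
    by (simp add: layer_err_def right_diff_distrib)
qed

lemma layer_err_exponential_decay:
  fixes Z \<tau> :: "complex \<Rightarrow> complex"
  assumes Z_holomorphic: "Z holomorphic_on strip \<alpha>"
    and Z_periodic: "\<And>t::real. Z (of_real (t + 2*pi)) = Z (of_real t)"
    and Z_inj: "\<And>s1 s2. s1 \<in> strip \<alpha> \<Longrightarrow> s2 \<in> strip \<alpha> \<Longrightarrow> Z s1 = Z s2 \<Longrightarrow>
                  \<exists>k::int. s1 = s2 + of_int k * (2*pi)"
    and \<tau>_analytic: "\<tau> analytic_on Z ` strip \<alpha>"
    and s: "s \<in> strip \<alpha>" and off_curve: "Z s \<notin> path_image (bcurve Z)"
    and C: "cmod (\<tau> (Z s)) < C"
  shows "\<exists>N0::nat. \<forall>N\<ge>N0. \<bar>layer_err Z \<tau> N (Z s)\<bar> \<le> C * exp (- \<bar>Im s\<bar> * real N)"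
proof -
  interpret periodic_simple_pole_quotient "\<lambda>w. \<tau> (Z w) * deriv Z w" "\<lambda>w. Z w - Z s" \<alpha> s
    by (rule layer_integrand_periodic_simple_pole[OF assms(1-6)])
  have "((\<lambda>w. Z w - Z s) has_field_derivative deriv Z s - 0) (at s)"
    by (intro DERIV_diff holomorphic_derivI[OF Z_holomorphic open_strip s] DERIV_const)
  hence "deriv (\<lambda>w. Z w - Z s) s = deriv Z s" by (simp add: DERIV_imp_deriv)
  hence "R = \<tau> (Z s)" using deriv_B_nonzero by (simp add: R_def)
  then obtain N1 where N1: "\<And>N. N \<ge> N1 \<Longrightarrow>
      cmod (periodic_trapezoid N F - contour_integral (linepath (0::complex) (2*pi)) F)
      \<le> 2*pi * (C * exp (- \<bar>Im s\<bar> * N))"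
    using trapezoid_error_decay[of C] C unfolding eventually_sequentially by auto
  show ?thesis
  proof (intro exI[of _ "max N1 1"] allI impI)
    fix N assume N: "max N1 1 \<le> N"
    define X where "X = periodic_trapezoid N F - contour_integral (linepath (0::complex) (2*pi)) F"
    have "layer_err Z \<tau> N (Z s) = Re (-(1 / (2*pi*\<i>)) * X)"
      using layer_err_eq_trapezoid_error[of N] N by (simp add: X_def F_def)
    also have "\<bar>\<dots>\<bar> \<le> cmod X / (2*pi)"
      using abs_Re_le_cmod[of "-(1 / (2*pi*\<i>)) * X"] by (simp add: norm_mult norm_divide)
    also have "\<dots> \<le> C * exp (- \<bar>Im s\<bar> * real N)"
      using N1[of N] N by (simp add: X_def pos_divide_le_eq mult.commute)
    finally show "\<bar>layer_err Z \<tau> N (Z s)\<bar> \<le> C * exp (- \<bar>Im s\<bar> * real N)" .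
  qed
qed

theorem theorem2p3:
  fixes Z \<tau> :: "complex \<Rightarrow> complex" and \<alpha> :: real and \<Omega> :: "complex set"
  assumes alpha_pos: "\<alpha> > 0"
    and Z_analytic: "Z analytic_on closed_strip \<alpha>"
    and Z_periodic: "\<And>t::real. Z (of_real (t + 2 * pi)) = Z (of_real t)"
    and Z_inj_mod: "\<And>s1 s2. s1 \<in> closed_strip \<alpha> \<Longrightarrow> s2 \<in> closed_strip \<alpha> \<Longrightarrow>
                       Z s1 = Z s2 \<Longrightarrow> \<exists>k::int. s1 = s2 + of_int k * (2 * pi)"
    and Z'_nonzero: "\<And>t::real. deriv Z (of_real t) \<noteq> 0"
    and simple: "simple_path (bcurve Z)"
    and ccw: "\<And>w. w \<in> inside (path_image (bcurve Z)) \<Longrightarrow> winding_number (bcurve Z) w = 1"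
    and Omega: "\<Omega> = inside (path_image (bcurve Z)) \<or> \<Omega> = outside (path_image (bcurve Z))"
    and tau_real: "\<And>t::real. \<tau> (Z (of_real t)) \<in> \<real>"
    and tau_analytic: "\<tau> analytic_on closure (Z ` strip \<alpha>)"
    and tau_bounded: "bounded (\<tau> ` closure (Z ` strip \<alpha>))"
  shows "\<forall>z \<in> Z ` strip \<alpha> - path_image (bcurve Z). \<forall>s \<in> strip \<alpha>. Z s = z \<longrightarrow>
           (\<forall>C. C > cmod (\<tau> z) \<longrightarrow>
              (\<exists>N0::nat. \<forall>N\<ge>N0. \<bar>layer_err Z \<tau> N z\<bar> \<le> C * exp (- \<bar>Im s\<bar> * real N)))"
proof (intro ballI allI impI)
  fix z s C
  assume z: "z \<in> Z ` strip \<alpha> - path_image (bcurve Z)" and s: "s \<in> strip \<alpha>" and "Z s = z"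
    and C: "cmod (\<tau> z) < C"
  have strip_closed: "strip \<alpha> \<subseteq> closed_strip \<alpha>" by (auto simp: strip_def closed_strip_def)
  show "\<exists>N0::nat. \<forall>N\<ge>N0. \<bar>layer_err Z \<tau> N z\<bar> \<le> C * exp (- \<bar>Im s\<bar> * real N)"
    unfolding \<open>Z s = z\<close>[symmetric]
  proof (rule layer_err_exponential_decay[OF _ Z_periodic _ _ s])
    show "Z holomorphic_on strip \<alpha>"
      using Z_analytic strip_closed analytic_on_subset analytic_imp_holomorphic by blast
    show "\<exists>k::int. s1 = s2 + of_int k * (2*pi)" if "s1 \<in> strip \<alpha>" "s2 \<in> strip \<alpha>" "Z s1 = Z s2" for s1 s2
      using that strip_closed by (intro Z_inj_mod) auto
    show "\<tau> analytic_on Z ` strip \<alpha>"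
      by (rule analytic_on_subset[OF tau_analytic closure_subset])
  qed (use z C \<open>Z s = z\<close> in auto)
qed

end
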